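(* Let $E/\mathbb{Q}$ be an elliptic curve. Suppose that for every positive integer $n$ there exist infinitely many $(n+1)$-dimensional $\mathbb{F}_2$-subspaces $V_1,V_2,\ldots$ of $\mathbb{Q}^\times/(\mathbb{Q}^\times)^2$ which are linearly independent (i.e. the sum $V_1+V_2+\cdots$ is direct) such that for every $i$ and every non-zero $v\in V_i$ the quadratic twist $E_v$ has positive rank over $\mathbb{Q}$. Then for every positive integer $n$ and every $\boldsymbol{\sigma}\in G_{\mathbb{Q}}^n$, the group $E(\bar{\mathbb{Q}}(\boldsymbol{\sigma}))$ has infinite rank.
   Context: $G_{\mathbb{Q}}=\operatorname{Gal}(\bar{\mathbb{Q}}/\mathbb{Q})$; for $\boldsymbol{\sigma}=(\sigma_1,\ldots,\sigma_n)\in G_{\mathbb{Q}}^n$, $\bar{\mathbb{Q}}(\boldsymbol{\sigma})$ is the subfield of $\bar{\mathbb{Q}}$ fixed by $\sigma_1,\ldots,\sigma_n$. For $v\in\mathbb{Q}^\times/(\mathbb{Q}^\times)^2$, $E_v$ denotes the quadratic twist of $E$ by (a representative of) $v$. *)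

theory Defs
  imports "HOL-Computational_Algebra.Polynomial" Complex_Main
begin

datatype 'a ecpt = Infty | Pt 'a 'a

definition on_curve :: "'a::field \<Rightarrow> 'a \<Rightarrow> 'a ecpt \<Rightarrow> bool" where
  "on_curve a b P = (case P of Infty \<Rightarrow> True | Pt x y \<Rightarrow> y^2 = x^3 + a*x + b)"

fun ec_add :: "'a::field \<Rightarrow> 'a ecpt \<Rightarrow> 'a ecpt \<Rightarrow> 'a ecpt" where
  "ec_add a Infty Q = Q"
| "ec_add a P Infty = P"
| "ec_add a (Pt x1 y1) (Pt x2 y2) =
     (if x1 = x2 \<and> y1 = - y2 then Infty
      else let l = (if x1 = x2 then (3*x1^2 + a) / (2*y1) else (y2 - y1) / (x2 - x1));
               x3 = l^2 - x1 - x2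
           in Pt x3 (l*(x1 - x3) - y1))"

fun ec_neg :: "'a::field ecpt \<Rightarrow> 'a ecpt" where
  "ec_neg Infty = Infty"
| "ec_neg (Pt x y) = Pt x (- y)"

fun ec_nmult :: "'a::field \<Rightarrow> nat \<Rightarrow> 'a ecpt \<Rightarrow> 'a ecpt" where
  "ec_nmult a 0 P = Infty"
| "ec_nmult a (Suc n) P = ec_add a P (ec_nmult a n P)"

definition ec_zmult :: "'a::field \<Rightarrow> int \<Rightarrow> 'a ecpt \<Rightarrow> 'a ecpt" where
  "ec_zmult a k P = (if k \<ge> 0 then ec_nmult a (nat k) P else ec_neg (ec_nmult a (nat (-k)) P))"

definition elliptic_over_Q :: "complex \<Rightarrow> complex \<Rightarrow> bool" where
  "elliptic_over_Q a b \<longleftrightarrow> a \<in> \<rat> \<and> b \<in> \<rat> \<and> 4*a^3 + 27*b^2 \<noteq> 0"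

definition points_over :: "'a::field \<Rightarrow> 'a \<Rightarrow> 'a set \<Rightarrow> 'a ecpt set" where
  "points_over a b K = {P. on_curve a b P \<and> (case P of Infty \<Rightarrow> True | Pt x y \<Rightarrow> x \<in> K \<and> y \<in> K)}"

definition infinite_rank :: "'a::field \<Rightarrow> 'a \<Rightarrow> 'a set \<Rightarrow> bool" where
  "infinite_rank a b K \<longleftrightarrow>
     (\<forall>m::nat. \<exists>Ps::nat \<Rightarrow> 'a ecpt. (\<forall>i<m. Ps i \<in> points_over a b K) \<and>
        (\<forall>c::nat \<Rightarrow> int. foldr (\<lambda>i R. ec_add a (ec_zmult a (c i) (Ps i)) R) [0..<m] Infty = Infty
            \<longrightarrow> (\<forall>i<m. c i = 0)))"

definition positive_rank :: "'a::field \<Rightarrow> 'a \<Rightarrow> 'a set \<Rightarrow> bool" where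
  "positive_rank a b K \<longleftrightarrow>
     (\<exists>P \<in> points_over a b K. \<forall>k::nat. k > 0 \<longrightarrow> ec_nmult a k P \<noteq> Infty)"

definition twist_a :: "'a::field \<Rightarrow> 'a \<Rightarrow> 'a" where "twist_a a d = a * d^2"
definition twist_b :: "'a::field \<Rightarrow> 'a \<Rightarrow> 'a" where "twist_b b d = b * d^3"

definition is_rat_square :: "rat \<Rightarrow> bool" where
  "is_rat_square q \<longleftrightarrow> (\<exists>r. q = r^2)"

text \<open>Subspaces of Q^x/(Q^x)^2 are represented by their preimages in Q^x:
  subgroups of Q^x containing all nonzero squares.\<close>
definition sq_subspace :: "rat set \<Rightarrow> bool" where
  "sq_subspace V \<longleftrightarrow> 0 \<notin> V \<and> 1 \<in> V \<and> (\<forall>p\<in>V. \<forall>q\<in>V. p*q \<in> V)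
     \<and> (\<forall>r. r \<noteq> 0 \<longrightarrow> r^2 \<in> V)"

definition sq_class :: "rat \<Rightarrow> rat set" where
  "sq_class q = {r. r \<noteq> 0 \<and> is_rat_square (q / r)}"

definition sq_dim_is :: "rat set \<Rightarrow> nat \<Rightarrow> bool" where
  "sq_dim_is V d \<longleftrightarrow> finite (sq_class ` V) \<and> card (sq_class ` V) = 2^d"

text \<open>The sum of the subspaces V i is direct.\<close>
definition sq_independent :: "(nat \<Rightarrow> rat set) \<Rightarrow> bool" where
  "sq_independent V \<longleftrightarrow>
     (\<forall>I q. finite I \<longrightarrow> (\<forall>i\<in>I. q i \<in> V i) \<longrightarrow> is_rat_square (\<Prod>i\<in>I. q i)
        \<longrightarrow> (\<forall>i\<in>I. is_rat_square (q i)))"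

definition Qbar :: "complex set" where "Qbar = {z. algebraic z}"

definition is_GQ :: "(complex \<Rightarrow> complex) \<Rightarrow> bool" where
  "is_GQ \<sigma> \<longleftrightarrow> bij_betw \<sigma> Qbar Qbar \<and>
     (\<forall>x\<in>Qbar. \<forall>y\<in>Qbar. \<sigma> (x + y) = \<sigma> x + \<sigma> y \<and> \<sigma> (x * y) = \<sigma> x * \<sigma> y)"

definition fixed_field :: "nat \<Rightarrow> (nat \<Rightarrow> complex \<Rightarrow> complex) \<Rightarrow> complex set" where
  "fixed_field n \<sigma> = {z \<in> Qbar. \<forall>i<n. \<sigma> i z = z}"

end

theory Submission
  imports Defs
begin

text \<open>Each subspace \<open>V\<^sub>j\<close> has \<open>2^(n+1)\<close> square classes, while the
  square roots of their representatives admit only \<open>2^n\<close> sign patterns under the \<open>\<sigma>\<^sub>i\<close>; so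
  some nonsquare \<open>d\<^sub>j \<in> V\<^sub>j\<close> has a square root \<open>s\<^sub>j\<close> fixed by all \<open>\<sigma>\<^sub>i\<close>. A rational point of
  infinite order on the twist by \<open>d\<^sub>j\<close> becomes, via \<open>(x, y) \<mapsto> (x/d\<^sub>j, y s\<^sub>j/d\<^sub>j\<^sup>2)\<close>, a point
  \<open>Q\<^sub>j \<in> E(\<rat>(s\<^sub>j))\<close> whose nonzero multiples have rational \<open>x\<close> and \<open>y \<in> \<rat>\<^sup>\<times> s\<^sub>j\<close>. Since
  the \<open>V\<^sub>j\<close> are independent, \<open>s\<^sub>j\<close> never lies in the field generated by the other \<open>s\<^sub>i\<close>, and
  comparing \<open>y\<close>-coordinates in a vanishing combination \<open>\<Sum> c\<^sub>j Q\<^sub>j\<close> forces all \<open>c\<^sub>j = 0\<close>.\<close>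

section \<open>Chord-and-tangent arithmetic\<close>

text \<open>For \<open>x\<^sub>3 = l^2 - x\<^sub>1 - x\<^sub>2\<close>, the cubic \<open>x^3 + a x + b - (l (x - x\<^sub>1) + y\<^sub>1)^2 -
  (x - x\<^sub>1)(x - x\<^sub>2)(x - x\<^sub>3)\<close> has degree at most one; these are its two coefficients. They
  vanish iff the line through \<open>(x\<^sub>1, y\<^sub>1)\<close> of slope \<open>l\<close> meets the curve at \<open>x\<^sub>1, x\<^sub>2, x\<^sub>3\<close>.\<close>
definition secant_coeff1 :: "'a::field \<Rightarrow> 'a \<Rightarrow> 'a \<Rightarrow> 'a \<Rightarrow> 'a \<Rightarrow> 'a" where
  "secant_coeff1 a l x1 x2 y1 =
     a - 2*l*(y1 - l*x1) - (x1*x2 + (x1 + x2)*(l^2 - x1 - x2))"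

definition secant_coeff0 :: "'a::field \<Rightarrow> 'a \<Rightarrow> 'a \<Rightarrow> 'a \<Rightarrow> 'a \<Rightarrow> 'a" where
  "secant_coeff0 b l x1 x2 y1 = b - (y1 - l*x1)^2 + x1*x2*(l^2 - x1 - x2)"

lemma cubic_minus_line:
  fixes a b l x1 x2 y1 x :: "'a::field"
  shows "x^3 + a*x + b - (l*(x - x1) + y1)^2 - (x - x1)*(x - x2)*(x - (l^2 - x1 - x2))
     = secant_coeff1 a l x1 x2 y1 * x + secant_coeff0 b l x1 x2 y1"
  unfolding secant_coeff1_def secant_coeff0_def
  by (simp add: power2_eq_square power3_eq_cube algebra_simps)

lemma secant_third_point_on_curve:
  fixes a b l x1 x2 y1 :: "'a::field"
  assumes "secant_coeff1 a l x1 x2 y1 = 0" "secant_coeff0 b l x1 x2 y1 = 0"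
  defines "x3 \<equiv> l^2 - x1 - x2"
  shows "(l*(x1 - x3) - y1)^2 = x3^3 + a*x3 + b"
proof -
  have "x3^3 + a*x3 + b - (l*(x3 - x1) + y1)^2 = 0"
    using cubic_minus_line[of x3 a b l x1 y1 x2] assms by simp
  thus ?thesis by (simp add: power2_eq_square algebra_simps)
qed

lemma chord_secant:
  fixes a b x1 x2 y1 y2 :: "'a::field"
  assumes c1: "y1^2 = x1^3 + a*x1 + b" and c2: "y2^2 = x2^3 + a*x2 + b"
    and ne: "x1 \<noteq> x2" and l: "y2 = y1 + l*(x2 - x1)"
  shows "secant_coeff1 a l x1 x2 y1 = 0 \<and> secant_coeff0 b l x1 x2 y1 = 0"
proof -
  define A B where "A = secant_coeff1 a l x1 x2 y1" and "B = secant_coeff0 b l x1 x2 y1"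
  have "A*x1 + B = 0" using cubic_minus_line[of x1 a b l x1 y1 x2] c1 unfolding A_def B_def by simp
  moreover have "A*x2 + B = 0"
    using cubic_minus_line[of x2 a b l x1 y1 x2] c2 l unfolding A_def B_def by (simp add: algebra_simps)
  moreover have "A*(x1 - x2) = (A*x1 + B) - (A*x2 + B)" by (simp add: algebra_simps)
  ultimately have "A*(x1 - x2) = 0" by simp
  with ne \<open>A*x1 + B = 0\<close> show ?thesis unfolding A_def B_def by simp
qed

lemma tangent_secant:
  fixes a b x1 y1 :: "'a::field"
  assumes c1: "y1^2 = x1^3 + a*x1 + b" and l: "2*l*y1 = 3*x1^2 + a"
  shows "secant_coeff1 a l x1 x1 y1 = 0 \<and> secant_coeff0 b l x1 x1 y1 = 0"
proof -
  have A: "secant_coeff1 a l x1 x1 y1 = 0"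
    using l unfolding secant_coeff1_def by (simp add: power2_eq_square algebra_simps)
  with cubic_minus_line[of x1 a b l x1 y1 x1] c1 show ?thesis by simp
qed

lemma secant_double_root_tangent:
  fixes a l x1 x2 y1 :: "'a::field"
  assumes "secant_coeff1 a l x1 x2 y1 = 0" "l^2 - x1 - x2 = x1"
  shows "2*l*y1 = 3*x1^2 + a"
proof -
  have l2: "l^2 = 2*x1 + x2" using assms(2) by (simp add: algebra_simps)
  have "secant_coeff1 a l x1 x2 y1 = a - 2*l*y1 + 2*l^2*x1 - x1*x2 - (x1 + x2)*x1"
    unfolding secant_coeff1_def assms(2) by (simp add: power2_eq_square algebra_simps)
  also have "\<dots> = a - 2*l*y1 + 3*x1^2"
    unfolding l2 by (simp add: power2_eq_square algebra_simps)
  finally have "secant_coeff1 a l x1 x2 y1 = a - 2*l*y1 + 3*x1^2" .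
  with assms(1) show ?thesis by (simp add: algebra_simps)
qed

lemma singular_point_disc_zero:
  fixes a b x :: "'a::field"
  assumes "0 = x^3 + a*x + b" "3*x^2 + a = 0"
  shows "4*a^3 + 27*b^2 = 0"
proof -
  have a: "a = -3*x^2" using assms(2) by (simp add: eq_neg_iff_add_eq_0 add.commute)
  with assms(1) have "b = 2*x^3" by (simp add: power2_eq_square power3_eq_cube algebra_simps)
  with a show ?thesis by (simp add: power2_eq_square power3_eq_cube algebra_simps)
qed

lemma ec_add_Pt_Pt_secant:
  fixes a b x1 x2 y1 y2 :: "'a::field_char_0"
  assumes c1: "y1^2 = x1^3 + a*x1 + b" and c2: "y2^2 = x2^3 + a*x2 + b"
    and not_opp: "\<not> (x1 = x2 \<and> y1 = - y2)"
  obtains l where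
    "ec_add a (Pt x1 y1) (Pt x2 y2) = Pt (l^2 - x1 - x2) (l*(x1 - (l^2 - x1 - x2)) - y1)"
    "secant_coeff1 a l x1 x2 y1 = 0" "secant_coeff0 b l x1 x2 y1 = 0"
    "y2 = y1 + l*(x2 - x1)"
proof (cases "x1 = x2")
  case True
  with c1 c2 have "y2^2 = y1^2" by simp
  hence "y2 = y1 \<or> y2 = - y1" by (simp add: power2_eq_iff)
  with not_opp True have y: "y2 = y1" "y1 \<noteq> 0" by auto
  define l where "l = (3*x1^2 + a) / (2*y1)"
  have "2*l*y1 = 3*x1^2 + a" using y(2) unfolding l_def by simp
  with that[of l] tangent_secant[OF c1] True y not_opp show ?thesis
    unfolding l_def by (simp add: Let_def)
next
  case False
  define l where "l = (y2 - y1) / (x2 - x1)"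
  have "y2 = y1 + l*(x2 - x1)" using False unfolding l_def by simp
  with that[of l] chord_secant[OF c1 c2 False] False show ?thesis
    unfolding l_def by (simp add: Let_def)
qed

lemma on_curve_ec_add:
  fixes a b :: "'a::field_char_0"
  assumes "on_curve a b P" "on_curve a b Q"
  shows "on_curve a b (ec_add a P Q)"
proof (cases P; cases Q)
  fix x1 y1 x2 y2 assume P: "P = Pt x1 y1" and Q: "Q = Pt x2 y2"
  have c: "y1^2 = x1^3 + a*x1 + b" "y2^2 = x2^3 + a*x2 + b"
    using assms P Q by (simp_all add: on_curve_def)
  show ?thesis
  proof (cases "x1 = x2 \<and> y1 = - y2")
    case False
    then obtain l where
      "ec_add a P Q = Pt (l^2 - x1 - x2) (l*(x1 - (l^2 - x1 - x2)) - y1)"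
      "secant_coeff1 a l x1 x2 y1 = 0" "secant_coeff0 b l x1 x2 y1 = 0"
      using ec_add_Pt_Pt_secant[OF c] unfolding P Q by metis
    thus ?thesis using secant_third_point_on_curve[of a l x1 x2 y1 b] by (simp add: on_curve_def)
  qed (simp add: P Q on_curve_def)
qed (use assms in simp_all)

lemma on_curve_Infty [simp]: "on_curve a b Infty"
  by (simp add: on_curve_def)

lemma on_curve_ec_neg: "on_curve a b P \<Longrightarrow> on_curve a b (ec_neg P)"
  by (cases P) (simp_all add: on_curve_def)

lemma on_curve_ec_nmult:
  fixes a b :: "'a::field_char_0"
  shows "on_curve a b P \<Longrightarrow> on_curve a b (ec_nmult a k P)"
  by (induction k) (simp_all add: on_curve_ec_add)

lemma ec_add_neg_ec_add:
  fixes a b :: "'a::field_char_0"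
  assumes "on_curve a b P" "on_curve a b X" and disc: "4*a^3 + 27*b^2 \<noteq> 0"
  shows "ec_add a P (ec_neg (ec_add a P X)) = ec_neg X"
proof (cases P; cases X)
  fix x1 y1 x2 y2 assume P: "P = Pt x1 y1" and X: "X = Pt x2 y2"
  have c: "y1^2 = x1^3 + a*x1 + b" "y2^2 = x2^3 + a*x2 + b"
    using assms P X by (simp_all add: on_curve_def)
  show ?thesis
  proof (cases "x1 = x2 \<and> y1 = - y2")
    case False
    then obtain l where sum: "ec_add a P X = Pt (l^2 - x1 - x2) (l*(x1 - (l^2 - x1 - x2)) - y1)"
      and coeff: "secant_coeff1 a l x1 x2 y1 = 0" and y2: "y2 = y1 + l*(x2 - x1)"
      using ec_add_Pt_Pt_secant[OF c] unfolding P X by metis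
    define x3 y3 where "x3 = l^2 - x1 - x2" and "y3 = l*(x1 - x3) - y1"
    text \<open>The point \<open>-(P + X)\<close> lies on the same line through \<open>P\<close>, so its sum with
      \<open>P\<close> is computed with the same slope \<open>l\<close> and returns the third point \<open>-X\<close>.\<close>
    have not_opp: "\<not> (x1 = x3 \<and> y1 = y3)"
    proof
      assume "x1 = x3 \<and> y1 = y3"
      hence "y1 = 0" "3*x1^2 + a = 0"
        using secant_double_root_tangent[OF coeff] unfolding x3_def y3_def by auto
      with c(1) singular_point_disc_zero[of x1 a b] disc show False by simp
    qed
    have slope: "(if x1 = x3 then (3*x1^2 + a)/(2*y1) else (- y3 - y1)/(x3 - x1)) = l"
    proof (cases "x1 = x3")
      case True
      with not_opp have "y1 \<noteq> 0" unfolding y3_def by auto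
      with True show ?thesis
        using secant_double_root_tangent[OF coeff] unfolding x3_def by (simp add: field_simps)
    qed (simp add: y3_def field_simps)
    have "ec_add a P (ec_neg (ec_add a P X)) = Pt (l^2 - x1 - x3) (l*(x1 - (l^2 - x1 - x3)) - y1)"
      using sum not_opp slope unfolding P x3_def[symmetric] y3_def[symmetric] by (simp add: Let_def)
    also have "\<dots> = ec_neg X" using y2 unfolding X x3_def by (simp add: algebra_simps)
    finally show ?thesis .
  qed (simp add: P X)
qed simp_all

text \<open>By induction on \<open>i\<close>, \<open>(k + i) P = -((k - i) P)\<close>, using \<open>P + (-(P + X)) = -X\<close>.\<close>
lemma ec_nmult_double_eq_Infty:
  fixes a b :: "'a::field_char_0"
  assumes P: "on_curve a b P" and disc: "4*a^3 + 27*b^2 \<noteq> 0"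
    and kP: "ec_nmult a k P = Pt x 0"
  shows "ec_nmult a (2*k) P = Infty"
proof -
  have reflect: "i \<le> k \<Longrightarrow> ec_nmult a (k + i) P = ec_neg (ec_nmult a (k - i) P)" for i
  proof (induction i)
    case (Suc i)
    then obtain j where j: "k - i = Suc j" "k - Suc i = j" by (metis Suc_diff_Suc Suc_le_lessD)
    have "ec_nmult a (k + Suc i) P = ec_add a P (ec_neg (ec_add a P (ec_nmult a j P)))"
      using Suc j by simp
    also have "\<dots> = ec_neg (ec_nmult a (k - Suc i) P)"
      using ec_add_neg_ec_add[OF P on_curve_ec_nmult[OF P] disc] j by simp
    finally show ?case .
  qed (simp add: kP)
  from reflect[of k] show ?thesis by (simp add: mult_2)
qed

section \<open>Twisting by scaling\<close>

text \<open>The isomorphism \<open>(x, y) \<mapsto> (x/u^2, y/u^3)\<close> from \<open>y^2 = x^3 + a u^4 x + b u^6\<close> to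
  \<open>y^2 = x^3 + a x + b\<close>; for \<open>u^2 = d\<close> its source is the quadratic twist by \<open>d\<close>.\<close>
fun ec_scale :: "'a::field \<Rightarrow> 'a ecpt \<Rightarrow> 'a ecpt" where
  "ec_scale u Infty = Infty"
| "ec_scale u (Pt x y) = Pt (x/u^2) (y/u^3)"

lemma ec_add_ec_scale:
  fixes a u :: "'a::field_char_0"
  assumes u: "u \<noteq> 0"
  shows "ec_add a (ec_scale u P) (ec_scale u Q) = ec_scale u (ec_add (a*u^4) P Q)"
proof (cases P; cases Q)
  fix x1 y1 x2 y2 assume P: "P = Pt x1 y1" and Q: "Q = Pt x2 y2"
  have eqx: "x1/u^2 = x2/u^2 \<longleftrightarrow> x1 = x2" using u by simp
  have eqy: "y1/u^3 = - (y2/u^3) \<longleftrightarrow> y1 = - y2" using u by (simp add: field_simps)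
  show ?thesis
  proof (cases "x1 = x2 \<and> y1 = - y2")
    case False
    define l where "l = (if x1 = x2 then (3*x1^2 + a*u^4)/(2*y1) else (y2 - y1)/(x2 - x1))"
    define l' where "l' = (if x1/u^2 = x2/u^2 then (3*(x1/u^2)^2 + a)/(2*(y1/u^3))
                          else (y2/u^3 - y1/u^3)/(x2/u^2 - x1/u^2))"
    have slope: "l' = l / u"
      using u unfolding eqx l_def l'_def
      by (cases "y1 = 0") (simp_all add: field_simps power2_eq_square power3_eq_cube power4_eq_xxxx)
    have "ec_add a (ec_scale u P) (ec_scale u Q) =
        Pt (l'^2 - x1/u^2 - x2/u^2) (l'*(x1/u^2 - (l'^2 - x1/u^2 - x2/u^2)) - y1/u^3)"
      using False eqx eqy unfolding P Q l'_def by (simp add: Let_def)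
    moreover have "ec_add (a*u^4) P Q = Pt (l^2 - x1 - x2) (l*(x1 - (l^2 - x1 - x2)) - y1)"
      using False unfolding P Q l_def by (simp add: Let_def)
    ultimately show ?thesis
      unfolding slope using u by (simp add: field_simps power2_eq_square power3_eq_cube)
  qed (simp add: P Q)
qed simp_all

lemma ec_neg_ec_scale: "ec_neg (ec_scale u P) = ec_scale u (ec_neg P)"
  by (cases P) auto

lemma ec_nmult_ec_scale:
  fixes a u :: "'a::field_char_0"
  assumes "u \<noteq> 0"
  shows "ec_nmult a k (ec_scale u P) = ec_scale u (ec_nmult (a*u^4) k P)"
  by (induction k) (simp_all add: ec_add_ec_scale[OF assms])

lemma ec_zmult_ec_scale:
  fixes a u :: "'a::field_char_0"
  assumes "u \<noteq> 0"
  shows "ec_zmult a k (ec_scale u P) = ec_scale u (ec_zmult (a*u^4) k P)"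
  by (simp add: ec_zmult_def ec_nmult_ec_scale[OF assms] ec_neg_ec_scale)

lemma on_curve_ec_scale:
  fixes a b u :: "'a::field"
  assumes "u \<noteq> 0" "on_curve (a*u^4) (b*u^6) P"
  shows "on_curve a b (ec_scale u P)"
proof (cases P)
  case (Pt x y)
  have "(y/u^3)^2 = (y^2)/u^6" by (simp add: power_divide flip: power_mult)
  also have "\<dots> = (x^3 + a*u^4*x + b*u^6)/u^6" using assms Pt by (simp add: on_curve_def)
  also have "\<dots> = (x/u^2)^3 + a*(x/u^2) + b" using assms(1)
    by (simp add: field_simps power_divide flip: power_mult power_add)
  finally show ?thesis using Pt by (simp add: on_curve_def)
qed simp

section \<open>Subfields generated over the rationals\<close>

inductive_set rat_adjoin :: "'a::field_char_0 set \<Rightarrow> 'a set" for T :: "'a set" where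
  rat: "q \<in> \<rat> \<Longrightarrow> q \<in> rat_adjoin T"
| generator: "t \<in> T \<Longrightarrow> t \<in> rat_adjoin T"
| add: "x \<in> rat_adjoin T \<Longrightarrow> y \<in> rat_adjoin T \<Longrightarrow> x + y \<in> rat_adjoin T"
| mult: "x \<in> rat_adjoin T \<Longrightarrow> y \<in> rat_adjoin T \<Longrightarrow> x * y \<in> rat_adjoin T"
| uminus: "x \<in> rat_adjoin T \<Longrightarrow> - x \<in> rat_adjoin T"
| inverse: "x \<in> rat_adjoin T \<Longrightarrow> inverse x \<in> rat_adjoin T"

lemma rat_adjoin_diff: "x \<in> rat_adjoin T \<Longrightarrow> y \<in> rat_adjoin T \<Longrightarrow> x - y \<in> rat_adjoin T"
  by (metis rat_adjoin.add rat_adjoin.uminus diff_conv_add_uminus)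

lemma rat_adjoin_divide: "x \<in> rat_adjoin T \<Longrightarrow> y \<in> rat_adjoin T \<Longrightarrow> x / y \<in> rat_adjoin T"
  by (metis rat_adjoin.mult rat_adjoin.inverse divide_inverse)

lemma rat_adjoin_power: "x \<in> rat_adjoin T \<Longrightarrow> x ^ n \<in> rat_adjoin T"
  by (induction n) (auto intro: rat_adjoin.intros)

lemma rat_adjoin_of_rat: "of_rat q \<in> rat_adjoin T"
  and rat_adjoin_numeral: "numeral m \<in> rat_adjoin T"
  by (auto intro: rat_adjoin.rat)

lemmas rat_adjoin_field_ops =
  rat_adjoin.add rat_adjoin.mult rat_adjoin.uminus rat_adjoin_diff rat_adjoin_divide
  rat_adjoin_power rat_adjoin_of_rat rat_adjoin_numeral

lemma rat_adjoin_mono: "x \<in> rat_adjoin T \<Longrightarrow> T \<subseteq> T' \<Longrightarrow> x \<in> rat_adjoin T'"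
  by (induction rule: rat_adjoin.induct) (auto intro: rat_adjoin.intros)

lemma rat_adjoin_empty: "rat_adjoin {} = \<rat>"
proof
  show "rat_adjoin {} \<subseteq> \<rat>"
  proof
    show "x \<in> rat_adjoin {} \<Longrightarrow> x \<in> \<rat>" for x
      by (induction rule: rat_adjoin.induct) auto
  qed
qed (auto intro: rat_adjoin.rat)

lemma rat_adjoin_inverse_sqrt:
  assumes t: "t^2 = of_rat d" and t_notin: "t \<notin> rat_adjoin T"
    and ab: "\<alpha> \<in> rat_adjoin T" "\<beta> \<in> rat_adjoin T"
  shows "\<exists>\<alpha>' \<beta>'. \<alpha>' \<in> rat_adjoin T \<and> \<beta>' \<in> rat_adjoin T \<and> inverse (\<alpha> + \<beta> * t) = \<alpha>' + \<beta>' * t"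
proof (cases "\<alpha> + \<beta> * t = 0")
  case True thus ?thesis by (intro exI[of _ 0]) (auto intro: rat_adjoin.rat)
next
  case False
  define N where "N = \<alpha>^2 - \<beta>^2 * of_rat d"
  have N: "(\<alpha> + \<beta> * t) * (\<alpha> - \<beta> * t) = N"
    using t[symmetric] unfolding N_def by (simp add: algebra_simps power2_eq_square)
  have "N \<noteq> 0"
  proof
    assume "N = 0"
    with N False have "\<alpha> = \<beta> * t" by simp
    moreover from this False have "\<beta> \<noteq> 0" by auto
    ultimately have "t = \<alpha> / \<beta>" by simp
    with t_notin ab show False by (auto intro: rat_adjoin_divide)
  qed
  have "inverse (\<alpha> + \<beta> * t) = \<alpha>/N + (- \<beta>/N) * t"
    using N \<open>N \<noteq> 0\<close> False by (simp add: field_simps inverse_eq_divide)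
  moreover have "N \<in> rat_adjoin T" unfolding N_def using ab by (auto intro!: rat_adjoin_field_ops)
  ultimately show ?thesis using ab
    by (intro exI[of _ "\<alpha>/N"] exI[of _ "- \<beta>/N"]) (auto intro: rat_adjoin_divide rat_adjoin.uminus)
qed

lemma rat_adjoin_insert_sqrt:
  assumes t: "t^2 = of_rat d" and t_notin: "t \<notin> rat_adjoin T"
    and x: "x \<in> rat_adjoin (insert t T)"
  shows "\<exists>\<alpha> \<beta>. \<alpha> \<in> rat_adjoin T \<and> \<beta> \<in> rat_adjoin T \<and> x = \<alpha> + \<beta> * t"
  using x
proof (induction rule: rat_adjoin.induct)
  case (rat q)
  thus ?case by (intro exI[of _ q] exI[of _ 0]) (auto intro: rat_adjoin.rat)
next
  case (generator u)
  show ?case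
  proof (cases "u = t")
    case True thus ?thesis by (intro exI[of _ 0] exI[of _ 1]) (auto intro: rat_adjoin.rat)
  next
    case False
    with generator show ?thesis
      by (intro exI[of _ u] exI[of _ 0]) (auto intro: rat_adjoin.intros)
  qed
next
  case (add x y)
  then obtain \<alpha> \<beta> \<alpha>' \<beta>' where "\<alpha> \<in> rat_adjoin T" "\<beta> \<in> rat_adjoin T" "x = \<alpha> + \<beta> * t"
    "\<alpha>' \<in> rat_adjoin T" "\<beta>' \<in> rat_adjoin T" "y = \<alpha>' + \<beta>' * t" by blast
  thus ?case
    by (intro exI[of _ "\<alpha> + \<alpha>'"] exI[of _ "\<beta> + \<beta>'"])
       (auto intro: rat_adjoin.add simp: algebra_simps)
next
  case (mult x y)
  then obtain \<alpha> \<beta> \<alpha>' \<beta>' where ab: "\<alpha> \<in> rat_adjoin T" "\<beta> \<in> rat_adjoin T" "x = \<alpha> + \<beta> * t"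
    "\<alpha>' \<in> rat_adjoin T" "\<beta>' \<in> rat_adjoin T" "y = \<alpha>' + \<beta>' * t" by blast
  have "x * y = (\<alpha>*\<alpha>' + \<beta>*\<beta>'*of_rat d) + (\<alpha>*\<beta>' + \<alpha>'*\<beta>) * t"
    using ab(3,6) t[symmetric] by (simp add: algebra_simps power2_eq_square)
  moreover have "\<alpha>*\<alpha>' + \<beta>*\<beta>'*of_rat d \<in> rat_adjoin T" "\<alpha>*\<beta>' + \<alpha>'*\<beta> \<in> rat_adjoin T"
    using ab by (auto intro!: rat_adjoin_field_ops)
  ultimately show ?case by blast
next
  case (uminus x)
  then obtain \<alpha> \<beta> where "\<alpha> \<in> rat_adjoin T" "\<beta> \<in> rat_adjoin T" "x = \<alpha> + \<beta> * t" by blast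
  thus ?case by (intro exI[of _ "- \<alpha>"] exI[of _ "- \<beta>"]) (auto intro: rat_adjoin.uminus)
next
  case (inverse x)
  then obtain \<alpha> \<beta> where "\<alpha> \<in> rat_adjoin T" "\<beta> \<in> rat_adjoin T" "x = \<alpha> + \<beta> * t" by blast
  thus ?case using rat_adjoin_inverse_sqrt[OF t t_notin] by simp
qed

lemma is_rat_square_if_Rats_power2:
  assumes "(x::'a::field_char_0) \<in> \<rat>" "x^2 = of_rat q"
  shows "is_rat_square q"
proof -
  obtain r where "x = of_rat r" using assms(1) by (rule Rats_cases)
  with assms(2) have "q = r^2" by (metis of_rat_eq_iff of_rat_power)
  thus ?thesis unfolding is_rat_square_def by blast
qed

text \<open>In the induction step write \<open>x = \<alpha> + \<beta> s\<^sub>k\<close> with \<open>\<alpha>, \<beta> \<in> \<rat>(s\<^sub>j : j \<in> S)\<close>. If \<open>x^2\<close> is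
  rational then \<open>\<alpha> \<beta> = 0\<close>, as otherwise \<open>s\<^sub>k\<close> would lie in that field; \<open>\<beta> = 0\<close> contradicts
  the hypothesis for \<open>U\<close>, and \<open>\<alpha> = 0\<close> the one for \<open>U \<union> {k}\<close> with witness \<open>\<beta> d\<^sub>k\<close>.\<close>
lemma sqrt_prod_notin_rat_adjoin:
  fixes s :: "nat \<Rightarrow> 'a::field_char_0" and d :: "nat \<Rightarrow> rat"
  assumes s: "\<And>j. (s j)^2 = of_rat (d j)"
    and nonsquare: "\<And>U. finite U \<Longrightarrow> U \<noteq> {} \<Longrightarrow> \<not> is_rat_square (\<Prod>j\<in>U. d j)"
    and "finite S"
  shows "finite U \<Longrightarrow> U \<noteq> {} \<Longrightarrow> U \<inter> S = {} \<Longrightarrow> x \<in> rat_adjoin (s ` S) \<Longrightarrow>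
           x^2 \<noteq> of_rat (\<Prod>j\<in>U. d j)"
  using \<open>finite S\<close>
proof (induction S arbitrary: U x rule: finite_induct)
  case empty
  thus ?case using is_rat_square_if_Rats_power2 nonsquare by (auto simp: rat_adjoin_empty)
next
  case (insert k S)
  have notin: "s k \<notin> rat_adjoin (s ` S)"
    using insert.IH[of "{k}" "s k"] insert.hyps s by auto
  obtain \<alpha> \<beta> where ab: "\<alpha> \<in> rat_adjoin (s ` S)" "\<beta> \<in> rat_adjoin (s ` S)" "x = \<alpha> + \<beta> * s k"
    using rat_adjoin_insert_sqrt[OF s notin] insert.prems(4) by (metis image_insert)
  have kU: "k \<notin> U" "U \<inter> S = {}" using insert.prems(3) by auto
  show ?case
  proof
    assume x2: "x^2 = of_rat (\<Prod>j\<in>U. d j)"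
    have expand: "x^2 = (\<alpha>^2 + \<beta>^2 * of_rat (d k)) + 2*\<alpha>*\<beta> * s k"
      using ab(3) s[of k, symmetric] by (simp add: power2_eq_square algebra_simps)
    consider "\<alpha> \<noteq> 0" "\<beta> \<noteq> 0" | "\<beta> = 0" | "\<alpha> = 0" by blast
    thus False
    proof cases
      case 1
      with expand x2 have "s k = (of_rat (\<Prod>j\<in>U. d j) - (\<alpha>^2 + \<beta>^2 * of_rat (d k))) / (2*\<alpha>*\<beta>)"
        by (simp add: field_simps)
      moreover have "\<dots> \<in> rat_adjoin (s ` S)" using ab by (intro rat_adjoin_field_ops)
      ultimately show False using notin by simp
    next
      case 2
      with expand x2 have "\<alpha>^2 = of_rat (\<Prod>j\<in>U. d j)" by simp
      with insert.IH[OF insert.prems(1,2) kU(2) ab(1)] show False by simp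
    next
      case 3
      with expand x2 have "(\<beta> * of_rat (d k))^2 = of_rat (\<Prod>j\<in>insert k U. d j)"
        using kU(1) insert.prems(1) s[of k]
        by (simp add: power_mult_distrib of_rat_mult power2_eq_square algebra_simps)
      moreover have "\<beta> * of_rat (d k) \<in> rat_adjoin (s ` S)" using ab by (intro rat_adjoin_field_ops)
      moreover have "insert k U \<inter> S = {}" using kU insert.hyps by auto
      ultimately show False using insert.IH[of "insert k U"] insert.prems(1) by simp
    qed
  qed
qed

corollary sqrt_notin_rat_adjoin:
  fixes s :: "nat \<Rightarrow> 'a::field_char_0" and d :: "nat \<Rightarrow> rat"
  assumes "\<And>j. (s j)^2 = of_rat (d j)"
    and "\<And>U. finite U \<Longrightarrow> U \<noteq> {} \<Longrightarrow> \<not> is_rat_square (\<Prod>j\<in>U. d j)"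
    and "finite S" "i \<notin> S"
  shows "s i \<notin> rat_adjoin (s ` S)"
  using sqrt_prod_notin_rat_adjoin[OF assms(1-3), of "{i}" "s i"] assms by auto

lemma points_over_rat_adjoin_ec_add:
  fixes a b :: "'a::field_char_0"
  assumes a: "a \<in> rat_adjoin T"
    and P: "P \<in> points_over a b (rat_adjoin T)" and Q: "Q \<in> points_over a b (rat_adjoin T)"
  shows "ec_add a P Q \<in> points_over a b (rat_adjoin T)"
proof (cases P; cases Q)
  fix x1 y1 x2 y2 assume P': "P = Pt x1 y1" and Q': "Q = Pt x2 y2"
  have xy: "x1 \<in> rat_adjoin T" "y1 \<in> rat_adjoin T" "x2 \<in> rat_adjoin T" "y2 \<in> rat_adjoin T"
    using P Q unfolding P' Q' points_over_def by auto
  define l where "l = (if x1 = x2 then (3*x1^2 + a)/(2*y1) else (y2 - y1)/(x2 - x1))"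
  have "l \<in> rat_adjoin T" unfolding l_def using xy a by (auto intro!: rat_adjoin_field_ops)
  hence "l^2 - x1 - x2 \<in> rat_adjoin T" "l*(x1 - (l^2 - x1 - x2)) - y1 \<in> rat_adjoin T"
    using xy by (auto intro!: rat_adjoin_field_ops)
  moreover have "on_curve a b (ec_add a P Q)"
    using P Q on_curve_ec_add unfolding points_over_def by blast
  ultimately show ?thesis unfolding P' Q' l_def points_over_def by (simp add: Let_def)
qed (use P Q in simp_all)

lemma points_over_rat_adjoin_ec_zmult:
  fixes a b :: "'a::field_char_0"
  assumes a: "a \<in> rat_adjoin T" and P: "P \<in> points_over a b (rat_adjoin T)"
  shows "ec_zmult a k P \<in> points_over a b (rat_adjoin T)"
proof -
  have Infty: "Infty \<in> points_over a b K" for K by (simp add: points_over_def)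
  have "ec_nmult a m P \<in> points_over a b (rat_adjoin T)" for m
    by (induction m) (simp_all add: Infty points_over_rat_adjoin_ec_add[OF a P])
  moreover have "ec_neg R \<in> points_over a b (rat_adjoin T)" if "R \<in> points_over a b (rat_adjoin T)" for R
    using that on_curve_ec_neg[of a b R]
    by (cases R) (auto simp: points_over_def intro: rat_adjoin.uminus)
  ultimately show ?thesis by (simp add: ec_zmult_def)
qed

lemma points_over_mono: "P \<in> points_over a b K \<Longrightarrow> K \<subseteq> K' \<Longrightarrow> P \<in> points_over a b K'"
  by (auto simp: points_over_def split: ecpt.splits)

section \<open>Points of infinite order on twists\<close>

lemma ec_neg_eq_Infty_iff [simp]: "ec_neg P = Infty \<longleftrightarrow> P = Infty"
  and ec_neg_eq_Pt_zero_iff [simp]: "ec_neg P = Pt x 0 \<longleftrightarrow> P = Pt x 0"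
  by (cases P; auto)+

lemma ec_zmult_eq_Infty_imp_zero:
  assumes "\<forall>k::nat. k > 0 \<longrightarrow> ec_nmult a k P \<noteq> Infty" "ec_zmult a k P = Infty"
  shows "k = 0"
proof (rule ccontr)
  assume "k \<noteq> 0"
  hence "nat \<bar>k\<bar> > 0" by simp
  moreover have "ec_nmult a (nat \<bar>k\<bar>) P = Infty"
    using assms(2) unfolding ec_zmult_def by (auto split: if_splits)
  ultimately show False using assms(1) by blast
qed

lemma ec_zmult_ne_two_torsion:
  fixes a b :: "'a::field_char_0"
  assumes "on_curve a b P" "4*a^3 + 27*b^2 \<noteq> 0" "\<forall>k::nat. k > 0 \<longrightarrow> ec_nmult a k P \<noteq> Infty"
  shows "ec_zmult a k P \<noteq> Pt x 0"
proof
  assume "ec_zmult a k P = Pt x 0"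
  hence "ec_nmult a (nat \<bar>k\<bar>) P = Pt x 0"
    unfolding ec_zmult_def by (auto split: if_splits)
  moreover from this have "nat \<bar>k\<bar> > 0" by (cases "nat \<bar>k\<bar>") simp_all
  ultimately show False
    using ec_nmult_double_eq_Infty[OF assms(1,2)] assms(3) by (metis mult_pos_pos zero_less_numeral)
qed

lemma ec_scale_sqrt_Pt:
  fixes s :: "'a::field_char_0"
  assumes "s^2 = of_rat r" "s \<noteq> 0"
  shows "ec_scale s (Pt x y) = Pt (x / of_rat r) ((y / of_rat r^2) * s)"
proof -
  have "of_rat r = s^2" using assms(1) by simp
  with assms(2) show ?thesis by (simp add: field_simps power2_eq_square power3_eq_cube)
qed

lemma twist_coeffs_sqrt:
  fixes a b s :: "'a::field"
  assumes "s^2 = d"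
  shows "twist_a a d = a * s^4" "twist_b b d = b * s^6"
  unfolding twist_a_def twist_b_def assms[symmetric] by (simp_all flip: power_mult)

lemma twist_disc:
  fixes a b s :: "'a::field"
  shows "4*(a*s^4)^3 + 27*(b*s^6)^2 = s^12 * (4*a^3 + 27*b^2)"
  by (simp add: algebra_simps power_mult_distrib flip: power_mult)

lemma ec_zmult_rational_point:
  fixes a b :: "'a::field_char_0"
  assumes a: "a \<in> \<rat>" and disc: "4*a^3 + 27*b^2 \<noteq> 0" and P: "P \<in> points_over a b \<rat>"
    and inf: "\<forall>k::nat. k > 0 \<longrightarrow> ec_nmult a k P \<noteq> Infty"
    and kP: "ec_zmult a k P = Pt x y"
  shows "x \<in> \<rat>" "y \<in> \<rat>" "y \<noteq> 0"
proof -
  have "ec_zmult a k P \<in> points_over a b (rat_adjoin {})"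
    using points_over_rat_adjoin_ec_zmult[where T = "{}"] a P unfolding rat_adjoin_empty by blast
  thus "x \<in> \<rat>" "y \<in> \<rat>" unfolding kP points_over_def rat_adjoin_empty by simp_all
  show "y \<noteq> 0"
    using ec_zmult_ne_two_torsion[OF _ disc inf] P kP unfolding points_over_def by blast
qed

lemma untwisted_point:
  fixes a b s :: "'a::field_char_0"
  assumes ab: "a \<in> \<rat>" "b \<in> \<rat>" and disc: "4*a^3 + 27*b^2 \<noteq> 0"
    and s: "s^2 = of_rat r" "s \<noteq> 0"
    and P: "P \<in> points_over (twist_a a (of_rat r)) (twist_b b (of_rat r)) \<rat>"
    and inf: "\<forall>k::nat. k > 0 \<longrightarrow> ec_nmult (twist_a a (of_rat r)) k P \<noteq> Infty"
  shows "on_curve a b (ec_scale s P)"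
    and "\<exists>X\<in>\<rat>. \<exists>Y\<in>\<rat>. ec_scale s P = Pt X (Y * s)"
    and "ec_zmult a k (ec_scale s P) = Infty \<Longrightarrow> k = 0"
    and "ec_zmult a k (ec_scale s P) = Pt X Y \<Longrightarrow> \<exists>y\<in>\<rat>. y \<noteq> 0 \<and> Y = y * s"
proof -
  define a' b' where "a' = twist_a a (of_rat r)" and "b' = twist_b b (of_rat r)"
  have a': "a' = a * s^4" and b': "b' = b * s^6"
    unfolding a'_def b'_def using twist_coeffs_sqrt[OF s(1)] by simp_all
  have a'_rat: "a' \<in> \<rat>" unfolding a'_def twist_a_def using ab by simp
  have disc': "4*a'^3 + 27*b'^2 \<noteq> 0" unfolding a' b' twist_disc using disc s(2) by simp
  have P': "P \<in> points_over a' b' \<rat>" using P unfolding a'_def b'_def .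
  note rational = ec_zmult_rational_point[OF a'_rat disc' P' inf[folded a'_def]]
  have mult: "ec_zmult a k (ec_scale s P) = ec_scale s (ec_zmult a' k P)" for k
    unfolding a' by (rule ec_zmult_ec_scale[OF s(2)])
  show "on_curve a b (ec_scale s P)"
    using on_curve_ec_scale[OF s(2)] P' unfolding a' b' points_over_def by blast
  show "\<exists>X\<in>\<rat>. \<exists>Y\<in>\<rat>. ec_scale s P = Pt X (Y * s)"
  proof (cases P)
    case (Pt x y)
    with P' have "x / of_rat r \<in> \<rat>" "y / of_rat r^2 \<in> \<rat>" unfolding points_over_def by auto
    thus ?thesis unfolding Pt ec_scale_sqrt_Pt[OF s] by blast
  qed (use inf[rule_format, of 1] in simp)
  show "k = 0" if "ec_zmult a k (ec_scale s P) = Infty"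
  proof -
    have "ec_zmult a' k P = Infty" using that unfolding mult by (cases "ec_zmult a' k P") auto
    with inf show ?thesis unfolding a'_def by (rule ec_zmult_eq_Infty_imp_zero)
  qed
  show "\<exists>y\<in>\<rat>. y \<noteq> 0 \<and> Y = y * s" if XY: "ec_zmult a k (ec_scale s P) = Pt X Y"
  proof -
    obtain x y where xy: "ec_zmult a' k P = Pt x y"
      using XY unfolding mult by (cases "ec_zmult a' k P") auto
    have "Y = (y / of_rat r^2) * s" using XY unfolding mult xy ec_scale_sqrt_Pt[OF s] by simp
    with rational[OF xy] s show ?thesis by (intro bexI[of _ "y / of_rat r^2"]) auto
  qed
qed

section \<open>Independence of the untwisted points\<close>

lemma foldr_ec_add_points_over:
  fixes a b :: "'a::field_char_0"
  assumes a: "a \<in> \<rat>" and Q: "\<And>i. Q i \<in> points_over a b (rat_adjoin {s i})"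
  shows "foldr (\<lambda>i R. ec_add a (ec_zmult a (c i) (Q i)) R) xs Infty
           \<in> points_over a b (rat_adjoin (s ` set xs))"
proof (induction xs)
  case (Cons i xs)
  have a': "a \<in> rat_adjoin (s ` set (i # xs))" using a by (rule rat_adjoin.rat)
  have "Q i \<in> points_over a b (rat_adjoin (s ` set (i # xs)))"
    using Q[of i] by (rule points_over_mono) (auto elim: rat_adjoin_mono)
  moreover have "foldr (\<lambda>i R. ec_add a (ec_zmult a (c i) (Q i)) R) xs Infty
                   \<in> points_over a b (rat_adjoin (s ` set (i # xs)))"
    using Cons.IH by (rule points_over_mono) (auto elim: rat_adjoin_mono)
  ultimately show ?case
    unfolding foldr.simps o_apply
    by (intro points_over_rat_adjoin_ec_add[OF a'] points_over_rat_adjoin_ec_zmult[OF a'])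
qed (simp add: points_over_def)

text \<open>If a combination \<open>\<Sum> c\<^sub>i Q\<^sub>i\<close> vanishes with \<open>c\<^sub>i Q\<^sub>i \<noteq> 0\<close> for its first term, then
  \<open>c\<^sub>i Q\<^sub>i\<close> is the negative of the rest, whose \<open>y\<close>-coordinate lies in the field generated by
  the other square roots \<open>s\<^sub>j\<close>; but the \<open>y\<close>-coordinate of \<open>c\<^sub>i Q\<^sub>i\<close> is a rational multiple of
  \<open>s\<^sub>i\<close>. No associativity of the group law is needed.\<close>
lemma foldr_ec_add_eq_Infty_imp_zero:
  fixes a b :: "'a::field_char_0"
  assumes a: "a \<in> \<rat>" and Q: "\<And>i. Q i \<in> points_over a b (rat_adjoin {s i})"
    and nonzero: "\<And>i k. ec_zmult a k (Q i) = Infty \<Longrightarrow> k = 0"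
    and y_coord: "\<And>i k X Y. ec_zmult a k (Q i) = Pt X Y \<Longrightarrow> \<exists>y\<in>\<rat>. y \<noteq> 0 \<and> Y = y * s i"
    and indep: "\<And>i S. finite S \<Longrightarrow> i \<notin> S \<Longrightarrow> s i \<notin> rat_adjoin (s ` S)"
  shows "distinct xs \<Longrightarrow> foldr (\<lambda>i R. ec_add a (ec_zmult a (c i) (Q i)) R) xs Infty = Infty
           \<Longrightarrow> \<forall>i\<in>set xs. c i = 0"
proof (induction xs)
  case (Cons i xs)
  define R where "R = foldr (\<lambda>i R. ec_add a (ec_zmult a (c i) (Q i)) R) xs Infty"
  have sum: "ec_add a (ec_zmult a (c i) (Q i)) R = Infty" using Cons.prems(2) unfolding R_def by simp
  show ?case
  proof (cases "ec_zmult a (c i) (Q i)")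
    case Infty
    with sum nonzero Cons show ?thesis unfolding R_def by simp
  next
    case (Pt X Y)
    obtain y where y: "y \<in> \<rat>" "y \<noteq> 0" "Y = y * s i" using y_coord[OF Pt] by blast
    obtain x' y' where R: "R = Pt x' y'" and "Y = - y'"
      using sum Pt by (cases R) (auto split: if_splits simp: Let_def)
    have "y' \<in> rat_adjoin (s ` set xs)"
      using foldr_ec_add_points_over[where Q = Q and s = s and c = c and xs = xs, OF a Q]
      unfolding R_def[symmetric] R points_over_def by simp
    hence "- y' / y \<in> rat_adjoin (s ` set xs)"
      by (rule rat_adjoin_divide[OF rat_adjoin.uminus rat_adjoin.rat[OF y(1)]])
    moreover have "- y' / y = s i" using \<open>Y = - y'\<close> y by (simp add: field_simps)
    ultimately show ?thesis using indep[of "set xs" i] Cons.prems(1) by simp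
  qed
qed simp

lemma infinite_rank_if_independent:
  fixes a b :: "'a::field_char_0" and Q :: "nat \<Rightarrow> 'a ecpt"
  assumes "a \<in> \<rat>" "\<And>i. Q i \<in> points_over a b (rat_adjoin {s i})"
    and "\<And>i k. ec_zmult a k (Q i) = Infty \<Longrightarrow> k = 0"
    and "\<And>i k X Y. ec_zmult a k (Q i) = Pt X Y \<Longrightarrow> \<exists>y\<in>\<rat>. y \<noteq> 0 \<and> Y = y * s i"
    and "\<And>i S. finite S \<Longrightarrow> i \<notin> S \<Longrightarrow> s i \<notin> rat_adjoin (s ` S)"
    and K: "\<And>i. Q i \<in> points_over a b K"
  shows "infinite_rank a b K"
proof -
  have "\<forall>i<m. c i = 0"
    if "foldr (\<lambda>i R. ec_add a (ec_zmult a (c i) (Q i)) R) [0..<m] Infty = Infty" for c m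
    using foldr_ec_add_eq_Infty_imp_zero[OF assms(1-5), where xs = "[0..<m]"] that by simp
  with K show ?thesis unfolding infinite_rank_def by blast
qed

section \<open>Automorphisms of the algebraic numbers\<close>

lemma algebraic_sqrt_of_rat: "(z::complex)^2 = of_rat r \<Longrightarrow> algebraic z"
  by (rule algebraicI'[of "[:- of_rat r, 0, 1:]"])
     (auto simp: coeff_pCons power2_eq_square split: nat.splits)

lemma Rats_subset_Qbar: "\<rat> \<subseteq> Qbar"
  unfolding Qbar_def by (auto intro: rat_imp_algebraic)

lemma GQ_add: "is_GQ \<sigma> \<Longrightarrow> x \<in> Qbar \<Longrightarrow> y \<in> Qbar \<Longrightarrow> \<sigma> (x + y) = \<sigma> x + \<sigma> y"
  and GQ_mult: "is_GQ \<sigma> \<Longrightarrow> x \<in> Qbar \<Longrightarrow> y \<in> Qbar \<Longrightarrow> \<sigma> (x * y) = \<sigma> x * \<sigma> y"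
  and GQ_inj: "is_GQ \<sigma> \<Longrightarrow> x \<in> Qbar \<Longrightarrow> y \<in> Qbar \<Longrightarrow> \<sigma> x = \<sigma> y \<Longrightarrow> x = y"
  unfolding is_GQ_def bij_betw_def inj_on_def by auto

lemma GQ_of_int:
  assumes G: "is_GQ \<sigma>"
  shows "\<sigma> (of_int k) = of_int k"
proof -
  have ints: "of_int m \<in> Qbar" for m using Rats_subset_Qbar by auto
  have zero: "\<sigma> 0 = 0" using GQ_add[OF G, of 0 0] ints[of 0] by simp
  have "\<sigma> 1 * \<sigma> 1 = \<sigma> 1 * 1" using GQ_mult[OF G, of 1 1] ints[of 1] by simp
  moreover have "\<sigma> 1 \<noteq> 0" using GQ_inj[OF G, of 1 0] zero ints[of 0] ints[of 1] by auto
  ultimately have one: "\<sigma> 1 = 1" by simp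
  have nonneg: "\<sigma> (of_int m) = of_int m" if "m \<ge> 0" for m
    using that
  proof (induction m rule: int_ge_induct)
    case (step m)
    thus ?case using GQ_add[OF G ints ints, of m 1] one by simp
  qed (simp add: zero)
  show ?thesis
  proof (cases "k \<ge> 0")
    case False
    have "\<sigma> (of_int k) + \<sigma> (of_int (- k)) = 0"
      using GQ_add[OF G ints ints, of k "- k"] zero by simp
    with nonneg[of "- k"] False show ?thesis by (simp add: add_eq_0_iff)
  qed (rule nonneg)
qed

lemma GQ_Rats:
  assumes G: "is_GQ \<sigma>" and q: "q \<in> \<rat>"
  shows "\<sigma> q = q"
proof -
  obtain m k where k: "k > 0" and qmk: "q = of_int m / of_int k"
    by (rule Rats_cases'[OF q])
  have "q \<in> Qbar" "of_int k \<in> Qbar" using q Rats_subset_Qbar by auto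
  hence "\<sigma> q * of_int k = \<sigma> (q * of_int k)" using GQ_mult[OF G] GQ_of_int[OF G] by simp
  also have "q * of_int k = of_int m" using k unfolding qmk by simp
  finally have "\<sigma> q * of_int k = of_int m" using GQ_of_int[OF G] by simp
  with k show ?thesis unfolding qmk by (simp add: eq_divide_eq)
qed

lemma GQ_sqrt_of_rat:
  assumes G: "is_GQ \<sigma>" and z: "z^2 = of_rat r"
  shows "\<sigma> z = z \<or> \<sigma> z = - z"
proof -
  have "z \<in> Qbar" using algebraic_sqrt_of_rat[OF z] unfolding Qbar_def by simp
  hence "(\<sigma> z)^2 = \<sigma> (z^2)" using GQ_mult[OF G] by (simp add: power2_eq_square)
  also have "\<dots> = z^2" unfolding z by (rule GQ_Rats[OF G]) simp
  finally show ?thesis by (simp add: power2_eq_iff)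
qed

lemma rat_times_sqrt_in_fixed_field:
  assumes G: "\<forall>i<n. is_GQ (\<sigma> i)" and s: "s^2 = of_rat r" "\<forall>i<n. \<sigma> i s = s" and y: "y \<in> \<rat>"
  shows "y * s \<in> fixed_field n \<sigma>"
proof -
  obtain q where q: "y = of_rat q" using y Rats_cases by blast
  have "(y * s)^2 = of_rat (q^2 * r)" using s(1) unfolding q by (simp add: power_mult_distrib of_rat_mult of_rat_power)
  hence "y * s \<in> Qbar" using algebraic_sqrt_of_rat unfolding Qbar_def by blast
  moreover have "\<sigma> i (y * s) = y * s" if "i < n" for i
  proof -
    have Qbar: "y \<in> Qbar" "s \<in> Qbar"
      using y Rats_subset_Qbar algebraic_sqrt_of_rat[OF s(1)] unfolding Qbar_def by auto
    have "is_GQ (\<sigma> i)" using G that by simp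
    from GQ_mult[OF this Qbar] GQ_Rats[OF this y] show ?thesis using s(2) that by simp
  qed
  ultimately show ?thesis unfolding fixed_field_def by blast
qed

lemma Rats_subset_fixed_field: "\<forall>i<n. is_GQ (\<sigma> i) \<Longrightarrow> \<rat> \<subseteq> fixed_field n \<sigma>"
  unfolding fixed_field_def using Rats_subset_Qbar GQ_Rats by blast

lemma is_rat_square_mult_square: "is_rat_square x \<Longrightarrow> is_rat_square (x * y^2)"
  unfolding is_rat_square_def by (metis power_mult_distrib)

lemma sq_class_eq_if_square_product:
  assumes v: "v \<noteq> 0" and w: "w \<noteq> 0" and "is_rat_square (v * w)"
  shows "sq_class v = sq_class w"
proof -
  obtain r where r: "v * w = r^2" using assms(3) unfolding is_rat_square_def by blast
  with v w have "r \<noteq> 0" by auto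
  have "v / z = (w / z) * (r / w)^2" for z
  proof -
    have "(w / z) * (r / w)^2 = r^2 / (w * z)" using w by (simp add: field_simps power2_eq_square)
    also have "\<dots> = v / z" using w unfolding r[symmetric] by simp
    finally show ?thesis by (rule sym)
  qed
  moreover have "w / z = (v / z) * (w / r)^2" for z
  proof -
    have "(v / z) * (w / r)^2 = (v * w) * w / (r^2 * z)" using \<open>r \<noteq> 0\<close> by (simp add: field_simps power2_eq_square)
    also have "\<dots> = w / z" using \<open>r \<noteq> 0\<close> unfolding r by simp
    finally show ?thesis by (rule sym)
  qed
  ultimately show ?thesis
    unfolding sq_class_def using is_rat_square_mult_square by (metis (no_types, lifting))
qed

lemma GQ_fixes_product_of_sqrts:
  assumes G: "is_GQ \<sigma>" and s: "s^2 = of_rat v" and t: "t^2 = of_rat w"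
    and same: "\<sigma> s = s \<longleftrightarrow> \<sigma> t = t"
  shows "\<sigma> (s * t) = s * t"
proof -
  have "s \<in> Qbar" "t \<in> Qbar" using algebraic_sqrt_of_rat s t unfolding Qbar_def by auto
  hence "\<sigma> (s * t) = \<sigma> s * \<sigma> t" by (rule GQ_mult[OF G])
  with GQ_sqrt_of_rat[OF G s] GQ_sqrt_of_rat[OF G t] same show ?thesis by auto
qed

text \<open>Pigeonhole: \<open>V\<close> has \<open>2^(n+1)\<close> square classes but the square roots of their
  representatives have only \<open>2^n\<close> patterns of signs under \<open>\<sigma>\<^sub>1, \<dots>, \<sigma>\<^sub>n\<close>; the product of two
  classes with the same pattern has a square root fixed by every \<open>\<sigma>\<^sub>i\<close>.\<close>
lemma exists_nonsquare_with_fixed_sqrt: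
  assumes G: "\<forall>i<n. is_GQ (\<sigma> i)" and V: "sq_subspace V" and dim: "sq_dim_is V (n + 1)"
  obtains d s where "d \<in> V" "\<not> is_rat_square d" "s^2 = of_rat d" "s \<noteq> 0" "\<forall>i<n. \<sigma> i s = s"
proof -
  define C where "C = sq_class ` V"
  define pattern where "pattern v = {i. i < n \<and> \<sigma> i (csqrt (of_rat v)) = csqrt (of_rat v)}" for v
  define rep where "rep X = (SOME v. v \<in> V \<and> sq_class v = X)" for X
  have rep: "rep X \<in> V \<and> sq_class (rep X) = X" if "X \<in> C" for X
  proof -
    from that obtain u where "u \<in> V" "sq_class u = X" unfolding C_def by blast
    thus ?thesis unfolding rep_def by (rule someI[of "\<lambda>v. v \<in> V \<and> sq_class v = X", OF conjI])
  qed
  have "\<not> inj_on (pattern \<circ> rep) C"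
  proof
    assume "inj_on (pattern \<circ> rep) C"
    hence "card C \<le> card (Pow {..<n})"
      by (rule card_inj_on_le) (auto simp: pattern_def)
    also have "\<dots> < card C" using dim unfolding sq_dim_is_def C_def by (simp add: card_Pow)
    finally show False by simp
  qed
  then obtain X Y where XY: "X \<in> C" "Y \<in> C" "X \<noteq> Y" "pattern (rep X) = pattern (rep Y)"
    unfolding inj_on_def by auto
  define v w where "v = rep X" and "w = rep Y"
  have vw: "v \<in> V" "w \<in> V" "sq_class v \<noteq> sq_class w" using rep XY unfolding v_def w_def by auto
  hence "v \<noteq> 0" "w \<noteq> 0" using V unfolding sq_subspace_def by auto
  show ?thesis
  proof (rule that)
    show "v * w \<in> V" using vw V unfolding sq_subspace_def by blast
    show "\<not> is_rat_square (v * w)" using sq_class_eq_if_square_product \<open>v \<noteq> 0\<close> \<open>w \<noteq> 0\<close> vw(3) by blast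
    show "(csqrt (of_rat v) * csqrt (of_rat w))^2 = of_rat (v * w)"
      by (simp add: power_mult_distrib of_rat_mult)
    show "csqrt (of_rat v) * csqrt (of_rat w) \<noteq> 0" using \<open>v \<noteq> 0\<close> \<open>w \<noteq> 0\<close> by simp
    show "\<forall>i<n. \<sigma> i (csqrt (of_rat v) * csqrt (of_rat w)) = csqrt (of_rat v) * csqrt (of_rat w)"
      using XY(4) G GQ_fixes_product_of_sqrts[of "\<sigma> _" "csqrt (of_rat v)" v "csqrt (of_rat w)" w]
      unfolding v_def[symmetric] w_def[symmetric] pattern_def by auto
  qed
qed

lemma infinite_rank_fixed_field_if_independent_twists:
  fixes a b :: complex and d :: "nat \<Rightarrow> rat"
  assumes E: "elliptic_over_Q a b" and G: "\<forall>i<n. is_GQ (\<sigma> i)"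
    and s: "\<And>j. (s j)^2 = of_rat (d j)" "\<And>j. s j \<noteq> 0" "\<And>j. \<forall>i<n. \<sigma> i (s j) = s j"
    and nonsquare: "\<And>U. finite U \<Longrightarrow> U \<noteq> {} \<Longrightarrow> \<not> is_rat_square (\<Prod>j\<in>U. d j)"
    and pos: "\<And>j. positive_rank (twist_a a (of_rat (d j))) (twist_b b (of_rat (d j))) \<rat>"
  shows "infinite_rank a b (fixed_field n \<sigma>)"
proof -
  have ab: "a \<in> \<rat>" "b \<in> \<rat>" and disc: "4*a^3 + 27*b^2 \<noteq> 0"
    using E unfolding elliptic_over_Q_def by auto
  obtain P where P: "\<And>j. P j \<in> points_over (twist_a a (of_rat (d j))) (twist_b b (of_rat (d j))) \<rat>"
    and inf: "\<And>j. \<forall>k::nat. k > 0 \<longrightarrow> ec_nmult (twist_a a (of_rat (d j))) k (P j) \<noteq> Infty"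
    using pos unfolding positive_rank_def by metis
  define Q where "Q j = ec_scale (s j) (P j)" for j
  note Q_props = untwisted_point[OF ab disc s(1,2) P inf, folded Q_def]
  have Q: "Q j \<in> points_over a b (rat_adjoin {s j}) \<and> Q j \<in> points_over a b (fixed_field n \<sigma>)" for j
  proof -
    obtain X Y where XY: "X \<in> \<rat>" "Y \<in> \<rat>" "Q j = Pt X (Y * s j)" using Q_props(2) by blast
    have "Y * s j \<in> rat_adjoin {s j}"
      by (rule rat_adjoin.mult[OF rat_adjoin.rat[OF XY(2)] rat_adjoin.generator]) simp
    moreover have "Y * s j \<in> fixed_field n \<sigma>" using rat_times_sqrt_in_fixed_field G s XY(2) by blast
    moreover have "X \<in> rat_adjoin {s j}" "X \<in> fixed_field n \<sigma>"
      using XY(1) rat_adjoin.rat Rats_subset_fixed_field[OF G] by auto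
    ultimately show ?thesis using Q_props(1)[of j] unfolding XY(3) points_over_def by simp
  qed
  have indep: "s i \<notin> rat_adjoin (s ` S)" if "finite S" "i \<notin> S" for i S
    using sqrt_notin_rat_adjoin[OF s(1) nonsquare that] .
  show ?thesis
    by (rule infinite_rank_if_independent[where Q = Q and s = s,
          OF ab(1) conjunct1[OF Q] Q_props(3,4) indep conjunct2[OF Q]])
qed

lemma exists_nonsquares_with_fixed_sqrts:
  assumes G: "\<forall>i<n. is_GQ (\<sigma> i)" and V: "\<forall>j. sq_subspace (V j) \<and> sq_dim_is (V j) (n + 1)"
  obtains d s where "\<And>j. d j \<in> V j" "\<And>j. \<not> is_rat_square (d j)" "\<And>j. (s j)^2 = of_rat (d j)"
    "\<And>j. s j \<noteq> 0" "\<And>j. \<forall>i<n. \<sigma> i (s j) = s j"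
proof -
  have "\<exists>d s. d \<in> V j \<and> \<not> is_rat_square d \<and> s^2 = of_rat d \<and> s \<noteq> 0 \<and> (\<forall>i<n. \<sigma> i s = s)" for j
  proof -
    obtain d s where "d \<in> V j" "\<not> is_rat_square d" "s^2 = of_rat d" "s \<noteq> 0" "\<forall>i<n. \<sigma> i s = s"
      using exists_nonsquare_with_fixed_sqrt[OF G] V by blast
    thus ?thesis by blast
  qed
  then obtain d s where ds: "\<And>j. d j \<in> V j \<and> \<not> is_rat_square (d j) \<and> (s j)^2 = of_rat (d j) \<and>
                             s j \<noteq> 0 \<and> (\<forall>i<n. \<sigma> i (s j) = s j)"
    by metis
  show ?thesis by (rule that[of d s]) (simp_all add: ds)
qed

theorem mainTheorem7:
  fixes a b :: complex
  assumes "elliptic_over_Q a b"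
    and "\<forall>n::nat. n > 0 \<longrightarrow>
           (\<exists>V :: nat \<Rightarrow> rat set.
              (\<forall>i. sq_subspace (V i) \<and> sq_dim_is (V i) (n + 1)) \<and>
              sq_independent V \<and>
              (\<forall>i. \<forall>v \<in> V i. \<not> is_rat_square v \<longrightarrow>
                  positive_rank (twist_a a (of_rat v)) (twist_b b (of_rat v)) \<rat>))"
  shows "\<forall>n::nat. n > 0 \<longrightarrow> (\<forall>\<sigma> :: nat \<Rightarrow> complex \<Rightarrow> complex.
           (\<forall>i<n. is_GQ (\<sigma> i)) \<longrightarrow> infinite_rank a b (fixed_field n \<sigma>))"
proof (intro allI impI)
  fix n :: nat and \<sigma> :: "nat \<Rightarrow> complex \<Rightarrow> complex"
  assume "n > 0" and G: "\<forall>i<n. is_GQ (\<sigma> i)"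
  obtain V where V: "\<forall>i. sq_subspace (V i) \<and> sq_dim_is (V i) (n + 1)"
    and indep: "sq_independent V"
    and pos: "\<forall>i. \<forall>v \<in> V i. \<not> is_rat_square v \<longrightarrow>
                positive_rank (twist_a a (of_rat v)) (twist_b b (of_rat v)) \<rat>"
    using assms(2)[rule_format, OF \<open>n > 0\<close>] by (elim exE conjE)
  obtain d s where d: "\<And>j. d j \<in> V j" "\<And>j. \<not> is_rat_square (d j)"
    and s: "\<And>j. (s j)^2 = of_rat (d j)" "\<And>j. s j \<noteq> 0" "\<And>j. \<forall>i<n. \<sigma> i (s j) = s j"
    using exists_nonsquares_with_fixed_sqrts[OF G V] by metis
  show "infinite_rank a b (fixed_field n \<sigma>)"
  proof (rule infinite_rank_fixed_field_if_independent_twists[OF assms(1) G s])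
    show "\<not> is_rat_square (\<Prod>j\<in>U. d j)" if "finite U" "U \<noteq> {}" for U
      using indep[unfolded sq_independent_def, rule_format, of U d] that d by auto
    show "positive_rank (twist_a a (of_rat (d j))) (twist_b b (of_rat (d j))) \<rat>" for j
      using pos d by blast
  qed
qed

end
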